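(* Let $F$ be the distribution function of a non-negative random variable with density $f=F'$ and $\int_0^\infty(1-F(t))dt<\infty$. Fix $T\in(0,\infty)$. Let $\{(\xi_{n,i},i=1,\dots,n+1),n\ge1\}$ be a row-wise independent triangular array where, in each row, the $\xi_{n,i}$ are i.i.d. with distribution $F$. Let $\mathcal A_n:=\{\sum_{i=1}^n\xi_{n,i}\le T<\sum_{i=1}^{n+1}\xi_{n,i}\}$ (of positive probability), and let $\mu_n:=\mathbb E[\xi_{n,1}\mid\mathcal A_n]$. Then (i) $\mu_n\to0$ as $n\to\infty$; (ii) $\mathrm{Var}(\xi_{n,1}):=\mathbb E[(\xi_{n,1}-\mu_n)^2\mid\mathcal A_n]\to0$ as $n\to\infty$; (iii) $n\mu_n\to T$ as $n\to\infty$.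
   Context: Under $\mathbb P(\cdot\mid\mathcal A_n)$ the variables $\xi_{n,1},\dots,\xi_{n,n}$ are exchangeable, hence identically distributed, so $\mu_n=\mathbb E[\xi_{n,i}\mid\mathcal A_n]$ for each $i\le n$. *)

theory Defs
  imports "HOL-Probability.Probability"
begin

definition cond_event_exp :: "'a measure \<Rightarrow> 'a set \<Rightarrow> ('a \<Rightarrow> real) \<Rightarrow> real" where
  "cond_event_exp M A X = (\<integral>x. X x * indicator A x \<partial>M) / measure M A"

definition renewal_event ::
  "'a measure \<Rightarrow> (nat \<Rightarrow> nat \<Rightarrow> 'a \<Rightarrow> real) \<Rightarrow> real \<Rightarrow> nat \<Rightarrow> 'a set" where
  "renewal_event M \<xi> T n =
     {x \<in> space M. (\<Sum>i=1..n. \<xi> n i x) \<le> T \<and> T < (\<Sum>i=1..n+1. \<xi> n i x)}"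

end

theory Submission
  imports Defs "HOL-Real_Asymp.Real_Asymp"
begin

(* Write S = xi_1 + ... + xi_n and m_delta = E[xi 1{xi <= delta}].  Given A_n the first n
   variables are exchangeable, so n mu_n = E[S | A_n] <= T; this gives (i), and (ii) follows
   from (xi - mu)^2 <= T xi + mu^2 on A_n.  For (iii),
     T - n mu_n = E[T - S | A_n] <= delta + T P(S <= T - delta) / P(A_n),
   and independence gives P(A_n) >= (1 - F delta) P(T - delta < S <= T) as well as
   n m_delta P(S <= T - delta) <= T P(S <= T), so P(S <= T - delta) / P(A_n) = O(1/n).
   Here m_delta > 0 because F has no atom at 0 while F delta > 0, the latter since
   P(A_N) > 0 forces F (T / N) > 0. *)

lemma renewal_event_cong:
  assumes "\<And>i. i \<in> {1..n+1} \<Longrightarrow> \<xi>' n i = \<xi> n i"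
  shows "renewal_event M \<xi>' T n = renewal_event M \<xi> T n"
proof -
  have "(\<Sum>i=1..n. \<xi>' n i x) = (\<Sum>i=1..n. \<xi> n i x)"
    and "(\<Sum>i=1..n+1. \<xi>' n i x) = (\<Sum>i=1..n+1. \<xi> n i x)" for x
    using assms by (auto intro!: sum.cong)
  then show ?thesis unfolding renewal_event_def by (simp only:)
qed

lemma (in prob_space) integral_iid_reindex:
  fixes X :: "nat \<Rightarrow> 'a \<Rightarrow> real" and h :: "(nat \<Rightarrow> real) \<Rightarrow> real"
  assumes I: "finite I" "I \<noteq> {}" and ind: "indep_vars (\<lambda>_. borel) X I"
    and rv: "\<And>i. i \<in> I \<Longrightarrow> X i \<in> borel_measurable M"
    and D: "\<And>i. i \<in> I \<Longrightarrow> distr M borel (X i) = D"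
    and \<sigma>: "inj_on \<sigma> I" "\<sigma> \<in> I \<rightarrow> I"
    and h: "h \<in> borel_measurable (PiM I (\<lambda>_. borel))"
  shows "(\<integral>x. h (\<lambda>j\<in>I. X (\<sigma> j) x) \<partial>M) = (\<integral>x. h (\<lambda>j\<in>I. X j x) \<partial>M)"
proof -
  let ?P = "PiM I (\<lambda>_. borel :: real measure)"
  let ?Q = "PiM I (\<lambda>_. D)"
  let ?V = "\<lambda>x. \<lambda>j\<in>I. X j x"
  let ?\<Phi> = "\<lambda>\<omega>. \<lambda>j\<in>I. \<omega> (\<sigma> j)"
  obtain i0 where i0: "i0 \<in> I" using I by auto
  have "sets ?Q = sets ?P"
    using D[OF i0] by (intro sets_PiM_cong) (metis sets_distr)+
  then have hQ: "h \<in> borel_measurable ?Q" using h by (simp cong: measurable_cong_sets)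
  have V: "?V \<in> measurable M ?P" using rv by (intro measurable_restrict) auto
  have distr_V: "distr M ?P ?V = ?Q"
    using indep_vars_iff_distr_eq_PiM'[THEN iffD1, OF I(2) rv ind] D by (simp cong: PiM_cong)
  have \<Phi>_Q: "?\<Phi> \<in> measurable ?Q ?Q" and \<Phi>_P: "?\<Phi> \<in> measurable ?P ?P"
    using \<sigma> by (auto intro!: measurable_restrict measurable_component_singleton)
  have distr_\<Phi>: "distr ?Q ?Q ?\<Phi> = ?Q"
    using distr_PiM_reindex[of I "\<lambda>_. D" \<sigma> I] \<sigma> prob_space_distr[OF rv[OF i0]] D[OF i0] by simp
  have "(\<integral>x. h (\<lambda>j\<in>I. X (\<sigma> j) x) \<partial>M) = (\<integral>x. h (?\<Phi> (?V x)) \<partial>M)"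
    using \<sigma> by (intro Bochner_Integration.integral_cong refl arg_cong[where f=h]) (auto simp: Pi_iff)
  also have "\<dots> = (\<integral>\<omega>. h (?\<Phi> \<omega>) \<partial>?Q)"
    using integral_distr[OF V measurable_comp[OF \<Phi>_P h, unfolded comp_def]] distr_V by simp
  also have "\<dots> = (\<integral>\<omega>. h \<omega> \<partial>?Q)"
    using integral_distr[OF \<Phi>_Q hQ] distr_\<Phi> by simp
  also have "\<dots> = (\<integral>x. h (?V x) \<partial>M)"
    using integral_distr[OF V h] distr_V by simp
  finally show ?thesis .
qed

lemma (in prob_space) integral_indicator_vimage:
  assumes [measurable]: "f \<in> borel_measurable M" "B \<in> sets borel"
  shows "(\<integral>x. indicator B (f x) \<partial>M) = prob {x\<in>space M. f x \<in> B}"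
proof -
  have "(\<integral>x. (indicator B (f x) :: real) \<partial>M) = (\<integral>x. indicator {x\<in>space M. f x \<in> B} x \<partial>M)"
    by (rule Bochner_Integration.integral_cong) (auto simp: indicator_def)
  then show ?thesis by (simp add: Int_absorb2)
qed

lemma sq_diff_le:
  fixes x c T :: real
  assumes "0 \<le> x" "x \<le> T" "0 \<le> c"
  shows "(x - c)\<^sup>2 \<le> T * x + c\<^sup>2"
proof -
  have "x * x \<le> T * x" using assms by (simp add: mult_right_mono)
  moreover have "0 \<le> x * c" using assms by simp
  ultimately show ?thesis by (simp add: power2_eq_square algebra_simps)
qed

definition truncate :: "real \<Rightarrow> real \<Rightarrow> real" where
  "truncate \<delta> y = y * indicator {0..\<delta>} y"

definition truncated_mean :: "real measure \<Rightarrow> real \<Rightarrow> real" where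
  "truncated_mean D \<delta> = (\<integral>y. truncate \<delta> y \<partial>D)"

lemma truncate_measurable[measurable]: "truncate \<delta> \<in> borel_measurable borel"
  unfolding truncate_def by measurable

lemma truncate_nonneg: "0 \<le> truncate \<delta> y"
  and truncate_le: "0 \<le> \<delta> \<Longrightarrow> truncate \<delta> y \<le> \<delta>"
  and truncate_le_self: "0 \<le> y \<Longrightarrow> truncate \<delta> y \<le> y"
  and truncate_neq_0D: "truncate \<delta> y \<noteq> 0 \<Longrightarrow> 0 \<le> y \<and> y \<le> \<delta>"
  by (auto simp: truncate_def indicator_def)

locale renewal_row = prob_space +
  fixes X :: "nat \<Rightarrow> 'a \<Rightarrow> real" and n :: nat and T :: real and F :: "real \<Rightarrow> real"
    and D :: "real measure"
  assumes n: "1 \<le> n" and T: "0 < T"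
    and X_measurable[measurable]: "\<And>i. X i \<in> borel_measurable M"
    and X_indep: "indep_vars (\<lambda>_. borel) X {1..n+1}"
    and distr_X: "\<And>i. i \<in> {1..n+1} \<Longrightarrow> distr M borel (X i) = D"
    and cdf: "\<And>i t. i \<in> {1..n+1} \<Longrightarrow> prob {x\<in>space M. X i x \<le> t} = F t"
    and F_neg: "\<And>t. t < 0 \<Longrightarrow> F t = 0"
    and D_no_atom_0: "emeasure D {0} = 0"
    and A_pos: "0 < prob (renewal_event M (\<lambda>_. X) T n)"
begin

abbreviation "A \<equiv> renewal_event M (\<lambda>_. X) T n"

definition "S x = (\<Sum>i=1..n. X i x)"

lemma S_measurable[measurable]: "S \<in> borel_measurable M"
  unfolding S_def by measurable

lemma mem_A: "x \<in> A \<longleftrightarrow> x \<in> space M \<and> S x \<le> T \<and> T < S x + X (n+1) x"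
  by (simp add: renewal_event_def S_def)

lemma A_in_sets[measurable]: "A \<in> sets M"
  unfolding renewal_event_def by measurable

lemma X_nonneg_AE:
  assumes i: "i \<in> {1..n+1}" shows "AE x in M. 0 \<le> X i x"
proof -
  have "AE x in M. - inverse (real (Suc k)) < X i x" for k
    using cdf[OF i, of "- inverse (real (Suc k))"] F_neg[of "- inverse (real (Suc k))"]
    by (intro AE_I[where N="{x\<in>space M. X i x \<le> - inverse (real (Suc k))}"])
       (auto simp: emeasure_eq_measure)
  then have "AE x in M. \<forall>k. - inverse (real (Suc k)) < X i x"
    by (simp add: AE_all_countable)
  then show ?thesis
  proof eventually_elim
    case (elim x)
    show ?case
    proof (rule ccontr)
      assume "\<not> 0 \<le> X i x"
      then obtain k where "inverse (real (Suc k)) < - X i x"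
        using reals_Archimedean by (metis neg_0_less_iff_less not_le)
      with elim[rule_format, of k] show False by linarith
    qed
  qed
qed

lemma all_X_nonneg_AE: "AE x in M. \<forall>i\<in>{1..n+1}. 0 \<le> X i x"
  by (rule AE_finite_allI) (auto intro: X_nonneg_AE)

lemma bounds_on_A:
  "AE x in M. x \<in> A \<longrightarrow> 0 \<le> S x \<and> S x \<le> T \<and> (\<forall>i\<in>{1..n}. 0 \<le> X i x \<and> X i x \<le> T)"
  using all_X_nonneg_AE
proof eventually_elim
  case (elim x)
  then have "0 \<le> S x" and "\<forall>i\<in>{1..n}. X i x \<le> S x"
    unfolding S_def by (auto intro!: sum_nonneg member_le_sum)
  with elim show ?case by (force simp: mem_A)
qed

lemma integrable_indicator_A:
  fixes g :: "'a \<Rightarrow> real"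
  assumes [measurable]: "g \<in> borel_measurable M" and "AE x in M. x \<in> A \<longrightarrow> \<bar>g x\<bar> \<le> B"
  shows "integrable M (\<lambda>x. g x * indicator A x)"
  by (rule integrable_const_bound[where B="\<bar>B\<bar>"]) (use assms(2) in \<open>auto simp: indicator_def\<close>)

lemma integrable_const_indicator: "C \<in> sets M \<Longrightarrow> integrable M (\<lambda>x. (c::real) * indicator C x)"
  by (rule integrable_const_bound[where B="\<bar>c\<bar>"]) (auto simp: indicator_def)

lemma integrable_X_indicator_A:
  assumes "i \<in> {1..n}" shows "integrable M (\<lambda>x. X i x * indicator A x)"
proof (rule integrable_indicator_A[where B=T])
  show "AE x in M. x \<in> A \<longrightarrow> \<bar>X i x\<bar> \<le> T"
    using bounds_on_A by eventually_elim (use assms in auto)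
qed measurable

lemma integrable_S_indicator_A: "integrable M (\<lambda>x. S x * indicator A x)"
proof (rule integrable_indicator_A[where B=T])
  show "AE x in M. x \<in> A \<longrightarrow> \<bar>S x\<bar> \<le> T"
    using bounds_on_A by eventually_elim auto
qed measurable

text \<open>Exchangeability: the transposition of 1 and i fixes S and A.\<close>

lemma integral_X_indicator_A_exchange:
  assumes i: "i \<in> {1..n}"
  shows "(\<integral>x. X i x * indicator A x \<partial>M) = (\<integral>x. X 1 x * indicator A x \<partial>M)"
proof -
  let ?I = "{1..n+1}"
  define \<sigma> where "\<sigma> j = (if j = 1 then i else if j = i then 1 else j)" for j :: nat
  define h where "h \<omega> = \<omega> 1 * indicator {\<omega>. (\<Sum>j=1..n. \<omega> j) \<le> T \<and> T < (\<Sum>j=1..n. \<omega> j) + \<omega> (n+1)} \<omega>"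
    for \<omega> :: "nat \<Rightarrow> real"
  have h_measurable: "h \<in> borel_measurable (PiM ?I (\<lambda>_. borel))"
    unfolding h_def using n by measurable
  have \<sigma>_invol: "\<sigma> (\<sigma> j) = j" for j unfolding \<sigma>_def by auto
  have \<sigma>_I: "\<sigma> \<in> ?I \<rightarrow> ?I" and \<sigma>_1: "\<sigma> 1 = i" and \<sigma>_last: "\<sigma> (n+1) = n+1"
    using i n unfolding \<sigma>_def by auto
  have \<sigma>_bij: "bij_betw \<sigma> {1..n} {1..n}"
    by (rule bij_betwI[where g=\<sigma>]) (use i n \<sigma>_invol in \<open>auto simp: \<sigma>_def\<close>)
  have h_id: "h (\<lambda>j\<in>?I. X j x) = X 1 x * indicator A x" if "x \<in> space M" for x
    using that n unfolding h_def by (simp add: mem_A S_def indicator_def)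
  have h_\<sigma>: "h (\<lambda>j\<in>?I. X (\<sigma> j) x) = X i x * indicator A x" if "x \<in> space M" for x
  proof -
    have "(\<Sum>j=1..n. (\<lambda>j\<in>?I. X (\<sigma> j) x) j) = (\<Sum>j=1..n. X (\<sigma> j) x)" by (intro sum.cong) auto
    also have "\<dots> = S x" unfolding S_def by (rule sum.reindex_bij_betw[OF \<sigma>_bij])
    finally show ?thesis using that n \<sigma>_1 \<sigma>_last unfolding h_def by (simp add: mem_A indicator_def)
  qed
  have "(\<integral>x. h (\<lambda>j\<in>?I. X (\<sigma> j) x) \<partial>M) = (\<integral>x. h (\<lambda>j\<in>?I. X j x) \<partial>M)"
  proof (rule integral_iid_reindex[OF _ _ X_indep _ distr_X _ \<sigma>_I h_measurable])
    show "inj_on \<sigma> ?I" by (metis inj_onI \<sigma>_invol)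
  qed auto
  then show ?thesis
    by (simp only: h_id h_\<sigma> cong: Bochner_Integration.integral_cong)
qed

lemma integral_S_indicator_A: "(\<integral>x. S x * indicator A x \<partial>M) = real n * (\<integral>x. X 1 x * indicator A x \<partial>M)"
proof -
  have "(\<integral>x. S x * indicator A x \<partial>M) = (\<Sum>i=1..n. (\<integral>x. X i x * indicator A x \<partial>M))"
    unfolding S_def sum_distrib_right
    by (rule Bochner_Integration.integral_sum) (rule integrable_X_indicator_A)
  also have "\<dots> = (\<Sum>i=1..n. (\<integral>x. X 1 x * indicator A x \<partial>M))"
    by (rule sum.cong[OF refl integral_X_indicator_A_exchange])
  also have "\<dots> = real n * (\<integral>x. X 1 x * indicator A x \<partial>M)"
    by simp
  finally show ?thesis .
qed

abbreviation "\<mu> \<equiv> cond_event_exp M A (X 1)"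

lemma n_cond_mean_eq: "real n * \<mu> = (\<integral>x. S x * indicator A x \<partial>M) / prob A"
  unfolding cond_event_exp_def integral_S_indicator_A by simp

lemma cond_mean_nonneg: "0 \<le> \<mu>"
proof -
  have "AE x in M. 0 \<le> S x * indicator A x"
    using bounds_on_A by eventually_elim (simp add: indicator_def)
  then have "0 \<le> (\<integral>x. S x * indicator A x \<partial>M)" by (rule integral_nonneg_AE)
  then have "0 \<le> real n * \<mu>" using A_pos unfolding n_cond_mean_eq by simp
  then show ?thesis using n by (simp add: zero_le_mult_iff)
qed

lemma n_cond_mean_le: "real n * \<mu> \<le> T"
proof -
  have "(\<integral>x. S x * indicator A x \<partial>M) \<le> (\<integral>x. T * indicator A x \<partial>M)"
  proof (rule integral_mono_AE[OF integrable_S_indicator_A integrable_const_indicator[OF A_in_sets]])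
    show "AE x in M. S x * indicator A x \<le> T * indicator A x"
      using bounds_on_A by eventually_elim (simp add: indicator_def)
  qed
  then show ?thesis using A_pos unfolding n_cond_mean_eq by (simp add: pos_divide_le_eq)
qed

lemma cond_var_nonneg: "0 \<le> cond_event_exp M A (\<lambda>x. (X 1 x - \<mu>)\<^sup>2)"
  unfolding cond_event_exp_def by (simp add: divide_nonneg_nonneg)

lemma cond_var_le: "cond_event_exp M A (\<lambda>x. (X 1 x - \<mu>)\<^sup>2) \<le> T * \<mu> + \<mu>\<^sup>2"
proof -
  have int_X1: "integrable M (\<lambda>x. X 1 x * indicator A x)"
    using integrable_X_indicator_A n by simp
  have pointwise: "AE x in M. (X 1 x - \<mu>)\<^sup>2 * indicator A x \<le> (T * X 1 x + \<mu>\<^sup>2) * indicator A x"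
    using bounds_on_A
  proof eventually_elim
    case (elim x)
    show ?case
    proof (cases "x \<in> A")
      case True
      with elim n have "0 \<le> X 1 x" "X 1 x \<le> T" by auto
      with True show ?thesis using sq_diff_le cond_mean_nonneg by simp
    qed simp
  qed
  have int_bound: "integrable M (\<lambda>x. (T * X 1 x + \<mu>\<^sup>2) * indicator A x)"
    using int_X1 integrable_const_indicator[OF A_in_sets] by (simp add: distrib_right mult.assoc)
  have "(\<integral>x. (X 1 x - \<mu>)\<^sup>2 * indicator A x \<partial>M) \<le> (\<integral>x. (T * X 1 x + \<mu>\<^sup>2) * indicator A x \<partial>M)"
  proof (rule integral_mono_AE[OF _ int_bound pointwise])
    show "integrable M (\<lambda>x. (X 1 x - \<mu>)\<^sup>2 * indicator A x)"
    proof (rule Bochner_Integration.integrable_bound[OF int_bound])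
      show "AE x in M. norm ((X 1 x - \<mu>)\<^sup>2 * indicator A x) \<le> norm ((T * X 1 x + \<mu>\<^sup>2) * indicator A x)"
        using pointwise by eventually_elim (simp add: indicator_def split: if_splits)
    qed measurable
  qed
  also have "\<dots> = T * (\<integral>x. X 1 x * indicator A x \<partial>M) + \<mu>\<^sup>2 * prob A"
    using int_X1 integrable_const_indicator[OF A_in_sets] by (simp add: distrib_right mult.assoc)
  also have "(\<integral>x. X 1 x * indicator A x \<partial>M) = \<mu> * prob A"
    using A_pos by (simp add: cond_event_exp_def)
  also have "T * (\<mu> * prob A) + \<mu>\<^sup>2 * prob A = (T * \<mu> + \<mu>\<^sup>2) * prob A"
    by (simp add: distrib_right)
  finally show ?thesis
    using A_pos unfolding cond_event_exp_def[of M A "\<lambda>x. (X 1 x - \<mu>)\<^sup>2"]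
    by (simp add: pos_divide_le_eq)
qed

lemma F_mono:
  assumes "s \<le> t" shows "F s \<le> F t"
proof -
  have "prob {x\<in>space M. X 1 x \<le> s} \<le> prob {x\<in>space M. X 1 x \<le> t}"
    using assms by (intro finite_measure_mono) auto
  then show ?thesis using cdf[of 1] by simp
qed

lemma prob_X_greater:
  assumes "i \<in> {1..n+1}" shows "prob {x\<in>space M. t < X i x} = 1 - F t"
proof -
  have "{x\<in>space M. t < X i x} = space M - {x\<in>space M. X i x \<le> t}" by auto
  then show ?thesis using prob_compl[of "{x\<in>space M. X i x \<le> t}"] cdf[OF assms] by simp
qed

text \<open>On A at least one of the n + 1 summands exceeds T / (n + 1), and at least one of the
  first n is at most T / n; a union bound turns this into bounds on F.\<close>

lemma F_T_div_Suc_n_lt_1: "F (T / real (n+1)) < 1"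
proof -
  let ?t = "T / real (n+1)"
  have "A \<subseteq> (\<Union>i\<in>{1..n+1}. {x\<in>space M. ?t < X i x})"
  proof
    fix x assume x: "x \<in> A"
    show "x \<in> (\<Union>i\<in>{1..n+1}. {x\<in>space M. ?t < X i x})"
    proof (rule ccontr)
      assume "x \<notin> (\<Union>i\<in>{1..n+1}. {x\<in>space M. ?t < X i x})"
      then have "\<forall>i\<in>{1..n+1}. X i x \<le> ?t" using x by (simp add: mem_A not_less)
      then have "(\<Sum>i=1..n+1. X i x) \<le> (\<Sum>i=1..n+1. ?t)" by (intro sum_mono) auto
      with x show False by (simp add: mem_A S_def)
    qed
  qed
  then have "prob A \<le> prob (\<Union>i\<in>{1..n+1}. {x\<in>space M. ?t < X i x})"
    by (intro finite_measure_mono) measurable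
  also have "\<dots> \<le> (\<Sum>i\<in>{1..n+1}. prob {x\<in>space M. ?t < X i x})"
    by (rule finite_measure_subadditive_finite) auto
  also have "\<dots> = real (n+1) * (1 - F ?t)"
    by (simp add: prob_X_greater)
  finally have "0 < real (n+1) * (1 - F ?t)" using A_pos by linarith
  then show ?thesis by (simp add: zero_less_mult_iff)
qed

lemma F_T_div_n_pos: "0 < F (T / real n)"
proof -
  let ?t = "T / real n"
  have "A \<subseteq> (\<Union>i\<in>{1..n}. {x\<in>space M. X i x \<le> ?t})"
  proof
    fix x assume x: "x \<in> A"
    show "x \<in> (\<Union>i\<in>{1..n}. {x\<in>space M. X i x \<le> ?t})"
    proof (rule ccontr)
      assume "x \<notin> (\<Union>i\<in>{1..n}. {x\<in>space M. X i x \<le> ?t})"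
      then have "\<forall>i\<in>{1..n}. ?t < X i x" using x by (simp add: mem_A not_le)
      then have "(\<Sum>i=1..n. ?t) < (\<Sum>i=1..n. X i x)" using n by (intro sum_strict_mono) auto
      with x n show False by (simp add: mem_A S_def)
    qed
  qed
  then have "prob A \<le> prob (\<Union>i\<in>{1..n}. {x\<in>space M. X i x \<le> ?t})"
    by (intro finite_measure_mono) measurable
  also have "\<dots> \<le> (\<Sum>i\<in>{1..n}. prob {x\<in>space M. X i x \<le> ?t})"
    by (rule finite_measure_subadditive_finite) auto
  also have "\<dots> = real n * F ?t"
    by (simp add: cdf)
  finally have "0 < real n * F ?t" using A_pos by linarith
  then show ?thesis by (simp add: zero_less_mult_iff)
qed

lemma integral_truncate_X:
  assumes "i \<in> {1..n+1}" shows "(\<integral>x. truncate \<delta> (X i x) \<partial>M) = truncated_mean D \<delta>"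
  using integral_distr[OF X_measurable truncate_measurable, of i \<delta>] distr_X[OF assms]
  by (simp add: truncated_mean_def)

lemma integrable_truncate_X: "0 \<le> \<delta> \<Longrightarrow> integrable M (\<lambda>x. truncate \<delta> (X i x))"
  by (rule integrable_const_bound[where B=\<delta>]) (auto simp: truncate_nonneg truncate_le)

lemma truncated_mean_nonneg: "0 \<le> truncated_mean D \<delta>"
  using integral_truncate_X[of 1 \<delta>] Bochner_Integration.integral_nonneg[of M "\<lambda>x. truncate \<delta> (X 1 x)"]
  by (simp add: truncate_nonneg)

text \<open>This is where the absence of an atom at 0 enters.\<close>

lemma truncated_mean_pos:
  assumes \<delta>: "0 < \<delta>" and F_\<delta>: "0 < F \<delta>" shows "0 < truncated_mean D \<delta>"
proof (rule ccontr)
  assume "\<not> 0 < truncated_mean D \<delta>"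
  then have "truncated_mean D \<delta> = 0" using truncated_mean_nonneg[of \<delta>] by linarith
  then have "(\<integral>x. truncate \<delta> (X 1 x) \<partial>M) = 0"
    using integral_truncate_X[of 1 \<delta>] by simp
  then have "AE x in M. truncate \<delta> (X 1 x) = 0"
    using integral_nonneg_eq_0_iff_AE[OF integrable_truncate_X] \<delta> by (simp add: truncate_nonneg)
  then have "AE x in M. X 1 x \<le> \<delta> \<longrightarrow> X 1 x = 0"
    using X_nonneg_AE[of 1, simplified] by eventually_elim (auto simp: truncate_def)
  then have "prob {x\<in>space M. X 1 x \<le> \<delta>} \<le> prob {x\<in>space M. X 1 x \<in> {0}}"
    by (intro finite_measure_mono_AE) (auto elim!: AE_mp)
  then have "F \<delta> \<le> prob {x\<in>space M. X 1 x \<in> {0}}"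
    using cdf[of 1 \<delta>] by simp
  also have "\<dots> = measure (distr M borel (X 1)) {0}"
    by (subst measure_distr) (auto simp: vimage_def Int_def conj_commute)
  also have "\<dots> = 0"
    using distr_X[of 1] D_no_atom_0 by (simp add: measure_def)
  finally show False using F_\<delta> by simp
qed

lemma T_prob_A_minus_integral_S_le:
  assumes \<delta>: "0 < \<delta>"
  shows "T * prob A - (\<integral>x. S x * indicator A x \<partial>M) \<le> \<delta> * prob A + T * prob {x\<in>space M. S x \<le> T - \<delta>}"
proof -
  let ?B = "{x\<in>space M. S x \<le> T - \<delta>}"
  have "(\<integral>x. (T - S x) * indicator A x \<partial>M) \<le> (\<integral>x. \<delta> * indicator A x + T * indicator ?B x \<partial>M)"
  proof (rule integral_mono_AE)
    show "integrable M (\<lambda>x. (T - S x) * indicator A x)"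
      using integrable_const_indicator[OF A_in_sets] integrable_S_indicator_A
      by (simp add: left_diff_distrib)
    show "integrable M (\<lambda>x. \<delta> * indicator A x + T * indicator ?B x)"
      by (intro Bochner_Integration.integrable_add integrable_const_indicator) measurable
    show "AE x in M. (T - S x) * indicator A x \<le> \<delta> * indicator A x + T * indicator ?B x"
      using bounds_on_A
    proof eventually_elim
      case (elim x)
      then show ?case
        using \<delta> T by (cases "x \<in> A"; cases "S x \<le> T - \<delta>") (auto simp: indicator_def mem_A)
    qed
  qed
  moreover have "(\<integral>x. (T - S x) * indicator A x \<partial>M) = T * prob A - (\<integral>x. S x * indicator A x \<partial>M)"
    using integrable_const_indicator[OF A_in_sets] integrable_S_indicator_A
    by (simp add: left_diff_distrib)
  moreover have "(\<integral>x. \<delta> * indicator A x + T * indicator ?B x \<partial>M) = \<delta> * prob A + T * prob ?B"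
    using integrable_const_indicator[of A] integrable_const_indicator[of ?B] by simp
  ultimately show ?thesis by simp
qed

text \<open>Independence of X (n + 1) from S: a sum just below T is completed to an element of A
  by any X (n + 1) exceeding \<delta>.\<close>

lemma prob_S_near_T_le_prob_A:
  assumes \<delta>: "0 < \<delta>"
  shows "prob {x\<in>space M. T - \<delta> < S x \<and> S x \<le> T} * (1 - F \<delta>) \<le> prob A"
proof -
  have "indep_var borel (X (n+1)) borel S"
    unfolding S_def[abs_def] using X_indep
    by (intro indep_vars_sum) (auto simp: atLeastAtMostSuc_conv)
  then have "prob ((\<lambda>x. (X (n+1) x, S x)) -` ({\<delta><..} \<times> {T-\<delta><..T}) \<inter> space M)
      = prob (X (n+1) -` {\<delta><..} \<inter> space M) * prob (S -` {T-\<delta><..T} \<inter> space M)"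
    by (rule indep_varD) auto
  moreover have "prob (X (n+1) -` {\<delta><..} \<inter> space M) = 1 - F \<delta>"
    using prob_X_greater[of "n+1" \<delta>] by (simp add: vimage_def Int_def conj_commute)
  moreover have "S -` {T-\<delta><..T} \<inter> space M = {x\<in>space M. T - \<delta> < S x \<and> S x \<le> T}"
    by auto
  moreover have "prob ((\<lambda>x. (X (n+1) x, S x)) -` ({\<delta><..} \<times> {T-\<delta><..T}) \<inter> space M) \<le> prob A"
    by (rule finite_measure_mono) (auto simp: mem_A)
  ultimately show ?thesis by (simp add: mult.commute)
qed

text \<open>X i is independent of the other n - 1 summands R; where X i contributes to the truncated
  mean, R \<le> T - \<delta> forces S \<le> T.\<close>

lemma truncated_mean_mult_prob_le:
  assumes \<delta>: "0 < \<delta>" and i: "i \<in> {1..n}"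
  shows "truncated_mean D \<delta> * prob {x\<in>space M. S x \<le> T - \<delta>}
    \<le> (\<integral>x. truncate \<delta> (X i x) * indicator {..T} (S x) \<partial>M)"
proof -
  define R where "R x = (\<Sum>j\<in>{1..n}-{i}. X j x)" for x
  have R_measurable[measurable]: "R \<in> borel_measurable M" unfolding R_def by measurable
  have S_eq: "S x = R x + X i x" for x
    unfolding S_def R_def using i sum.remove[of "{1..n}" i "\<lambda>j. X j x"] by (simp add: add.commute)
  have "indep_var borel (X i) borel R"
    unfolding R_def[abs_def] using i by (intro indep_vars_sum) (auto intro: indep_vars_subset[OF X_indep])
  then have "indep_var borel (\<lambda>x. truncate \<delta> (X i x)) borel (\<lambda>x. indicator {..T-\<delta>} (R x) :: real)"
    using indep_var_compose[of borel "X i" borel R, OF _ truncate_measurable] by (simp add: comp_def)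
  then have "(\<integral>x. truncate \<delta> (X i x) * indicator {..T-\<delta>} (R x) \<partial>M)
      = (\<integral>x. truncate \<delta> (X i x) \<partial>M) * (\<integral>x. indicator {..T-\<delta>} (R x) \<partial>M)"
    using \<delta> by (intro indep_var_lebesgue_integral integrable_truncate_X integrable_const_bound[where B=1])
      (auto simp: indicator_def)
  also have "\<dots> = truncated_mean D \<delta> * prob {x\<in>space M. R x \<in> {..T-\<delta>}}"
    using i by (simp add: integral_truncate_X integral_indicator_vimage)
  finally have product: "(\<integral>x. truncate \<delta> (X i x) * indicator {..T-\<delta>} (R x) \<partial>M)
      = truncated_mean D \<delta> * prob {x\<in>space M. R x \<in> {..T-\<delta>}}" .
  have "AE x in M. 0 \<le> X i x" using X_nonneg_AE i by simp
  then have "AE x in M. x \<in> {x\<in>space M. S x \<le> T - \<delta>} \<longrightarrow> x \<in> {x\<in>space M. R x \<in> {..T-\<delta>}}"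
    by eventually_elim (auto simp: S_eq)
  then have "prob {x\<in>space M. S x \<le> T - \<delta>} \<le> prob {x\<in>space M. R x \<in> {..T-\<delta>}}"
    by (rule finite_measure_mono_AE) measurable
  then have "truncated_mean D \<delta> * prob {x\<in>space M. S x \<le> T - \<delta>}
      \<le> (\<integral>x. truncate \<delta> (X i x) * indicator {..T-\<delta>} (R x) \<partial>M)"
    unfolding product using truncated_mean_nonneg by (rule mult_left_mono)
  also have "\<dots> \<le> (\<integral>x. truncate \<delta> (X i x) * indicator {..T} (S x) \<partial>M)"
  proof (rule integral_mono)
    show "integrable M (\<lambda>x. truncate \<delta> (X i x) * indicator {..T-\<delta>} (R x))"
      "integrable M (\<lambda>x. truncate \<delta> (X i x) * indicator {..T} (S x))"
      using \<delta> by (auto intro!: integrable_const_bound[where B=\<delta>]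
          simp: indicator_def truncate_nonneg truncate_le)
    show "truncate \<delta> (X i x) * indicator {..T-\<delta>} (R x) \<le> truncate \<delta> (X i x) * indicator {..T} (S x)" for x
      using truncate_neq_0D[of \<delta> "X i x"] truncate_nonneg[of \<delta> "X i x"]
      by (cases "truncate \<delta> (X i x) = 0") (auto simp: indicator_def S_eq)
  qed
  finally show ?thesis .
qed

lemma n_truncated_mean_mult_prob_le:
  assumes \<delta>: "0 < \<delta>"
  shows "real n * truncated_mean D \<delta> * prob {x\<in>space M. S x \<le> T - \<delta>} \<le> T * prob {x\<in>space M. S x \<le> T}"
proof -
  have integrable: "integrable M (\<lambda>x. truncate \<delta> (X i x) * indicator {..T} (S x))" for i
    using \<delta> by (auto intro!: integrable_const_bound[where B=\<delta>] simp: indicator_def truncate_nonneg truncate_le)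
  have "real n * truncated_mean D \<delta> * prob {x\<in>space M. S x \<le> T - \<delta>}
      = (\<Sum>i=1..n. truncated_mean D \<delta> * prob {x\<in>space M. S x \<le> T - \<delta>})"
    by simp
  also have "\<dots> \<le> (\<Sum>i=1..n. (\<integral>x. truncate \<delta> (X i x) * indicator {..T} (S x) \<partial>M))"
    by (rule sum_mono) (rule truncated_mean_mult_prob_le[OF \<delta>])
  also have "\<dots> = (\<integral>x. (\<Sum>i=1..n. truncate \<delta> (X i x)) * indicator {..T} (S x) \<partial>M)"
    unfolding sum_distrib_right by (rule Bochner_Integration.integral_sum[symmetric]) (rule integrable)
  also have "\<dots> \<le> (\<integral>x. T * indicator {..T} (S x) \<partial>M)"
  proof (rule integral_mono_AE)
    show "integrable M (\<lambda>x. (\<Sum>i=1..n. truncate \<delta> (X i x)) * indicator {..T} (S x))"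
      unfolding sum_distrib_right using integrable by (rule Bochner_Integration.integrable_sum)
    show "integrable M (\<lambda>x. T * indicator {..T} (S x))"
      using T by (intro integrable_const_bound[where B=T]) (auto simp: indicator_def)
    show "AE x in M. (\<Sum>i=1..n. truncate \<delta> (X i x)) * indicator {..T} (S x) \<le> T * indicator {..T} (S x)"
      using all_X_nonneg_AE
    proof eventually_elim
      case (elim x)
      then have "(\<Sum>i=1..n. truncate \<delta> (X i x)) \<le> S x"
        unfolding S_def by (intro sum_mono truncate_le_self) auto
      then show ?case by (simp add: indicator_def)
    qed
  qed
  also have "\<dots> = T * prob {x\<in>space M. S x \<le> T}"
    using integral_indicator_vimage[OF S_measurable, of "{..T}"] by simp
  finally show ?thesis .
qed

lemma T_minus_n_cond_mean_le:
  assumes \<delta>: "0 < \<delta>" and F_\<delta>: "F \<delta> < 1" and large: "T < real n * truncated_mean D \<delta>"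
  shows "T - real n * \<mu> \<le> \<delta> + T\<^sup>2 / ((1 - F \<delta>) * (real n * truncated_mean D \<delta> - T))"
proof -
  define \<kappa> where "\<kappa> = 1 - F \<delta>"
  define Q where "Q = real n * truncated_mean D \<delta> - T"
  define p where "p = prob A"
  define a where "a = prob {x\<in>space M. S x \<le> T - \<delta>}"
  define b where "b = prob {x\<in>space M. T - \<delta> < S x \<and> S x \<le> T}"
  have \<kappa>: "0 < \<kappa>" and Q: "0 < Q" and p: "0 < p"
    using F_\<delta> large A_pos by (simp_all add: \<kappa>_def Q_def p_def)
  have "prob ({x\<in>space M. S x \<le> T - \<delta>} \<union> {x\<in>space M. T - \<delta> < S x \<and> S x \<le> T}) = a + b"
    unfolding a_def b_def by (rule finite_measure_Union) auto
  moreover have "{x\<in>space M. S x \<le> T - \<delta>} \<union> {x\<in>space M. T - \<delta> < S x \<and> S x \<le> T} = {x\<in>space M. S x \<le> T}"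
    using \<delta> by auto
  ultimately have "real n * truncated_mean D \<delta> * a \<le> T * (a + b)"
    using n_truncated_mean_mult_prob_le[OF \<delta>] by (simp add: a_def)
  then have a_le: "a * Q \<le> T * b" by (simp add: Q_def algebra_simps)
  have b_le: "b * \<kappa> \<le> p"
    using prob_S_near_T_le_prob_A[OF \<delta>] by (simp add: \<kappa>_def p_def b_def)
  have "real n * \<mu> * p = (\<integral>x. S x * indicator A x \<partial>M)"
    using A_pos unfolding p_def n_cond_mean_eq by simp
  then have mean: "(T - real n * \<mu>) * p \<le> \<delta> * p + T * a"
    using T_prob_A_minus_integral_S_le[OF \<delta>] by (simp add: p_def a_def left_diff_distrib)
  have "T * a * (\<kappa> * Q) = T * \<kappa> * (a * Q)" by (simp add: algebra_simps)
  also have "\<dots> \<le> T * \<kappa> * (T * b)" using a_le T \<kappa> by (simp add: mult_left_mono)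
  also have "\<dots> = T\<^sup>2 * (b * \<kappa>)" by (simp add: algebra_simps power2_eq_square)
  also have "\<dots> \<le> T\<^sup>2 * p" using b_le by (simp add: mult_left_mono)
  finally have "T * a \<le> T\<^sup>2 / (\<kappa> * Q) * p"
    using \<kappa> Q by (simp add: pos_le_divide_eq field_simps)
  with mean have "(T - real n * \<mu>) * p \<le> (\<delta> + T\<^sup>2 / (\<kappa> * Q)) * p"
    by (simp add: distrib_right)
  then show ?thesis using p by (simp add: \<kappa>_def Q_def)
qed

end

lemma LIMSEQ_of_error_bounds:
  fixes a :: "nat \<Rightarrow> real"
  assumes upper: "\<forall>\<^sub>F n in sequentially. a n \<le> L"
    and error: "\<And>\<delta>. 0 < \<delta> \<Longrightarrow> \<delta> \<le> \<delta>\<^sub>0 \<Longrightarrow> \<exists>c m. 0 < m \<and>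
      (\<forall>\<^sub>F n in sequentially. L < real n * m \<longrightarrow> L - a n \<le> \<delta> + c / (real n * m - L))"
    and \<delta>\<^sub>0: "0 < \<delta>\<^sub>0"
  shows "a \<longlonglongrightarrow> L"
proof (rule order_tendstoI)
  fix u assume "L < u"
  show "\<forall>\<^sub>F n in sequentially. a n < u"
    using upper by eventually_elim (use \<open>L < u\<close> in linarith)
next
  fix u assume u: "u < L"
  define \<delta> where "\<delta> = min ((L - u) / 2) \<delta>\<^sub>0"
  have \<delta>: "0 < \<delta>" "\<delta> \<le> \<delta>\<^sub>0" "\<delta> \<le> (L - u) / 2"
    using u \<delta>\<^sub>0 unfolding \<delta>_def by (auto simp: min_def)
  obtain c m where m: "0 < m"
    and bound: "\<forall>\<^sub>F n in sequentially. L < real n * m \<longrightarrow> L - a n \<le> \<delta> + c / (real n * m - L)"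
    using error[OF \<delta>(1,2)] by blast
  have "\<forall>\<^sub>F n in sequentially. L < real n * m"
    using m by real_asymp
  moreover have "(\<lambda>n. c / (real n * m - L)) \<longlonglongrightarrow> 0"
    using m by real_asymp
  then have "\<forall>\<^sub>F n in sequentially. c / (real n * m - L) < (L - u) / 2"
    using u by (intro order_tendstoD(2)) auto
  ultimately show "\<forall>\<^sub>F n in sequentially. u < a n"
    using bound
  proof eventually_elim
    case (elim n)
    then have "L - a n \<le> \<delta> + c / (real n * m - L)" by blast
    with elim \<delta>(3) show ?case by argo
  qed
qed

locale renewal_array =
  fixes M :: "'a measure" and X :: "nat \<Rightarrow> nat \<Rightarrow> 'a \<Rightarrow> real" and T :: real
    and F :: "real \<Rightarrow> real" and D :: "real measure"
  assumes row: "\<And>n. 1 \<le> n \<Longrightarrow> renewal_row M (X n) n T F D"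
begin

abbreviation "\<mu> n \<equiv> cond_event_exp M (renewal_event M X T n) (X n 1)"

lemma row_event: "renewal_event M (\<lambda>_. X n) T n = renewal_event M X T n"
  by (rule renewal_event_cong) simp

lemma T_pos: "0 < T"
  using renewal_row.T[OF row[of 1]] by simp

lemma F_pos:
  assumes "0 < \<delta>" shows "0 < F \<delta>"
proof -
  obtain N where N: "T / \<delta> < real N" using reals_Archimedean2 by blast
  moreover have "0 < T / \<delta>" using T_pos assms by simp
  ultimately have "1 \<le> N" by (cases N) auto
  have "T / real N < \<delta>" using N \<open>1 \<le> N\<close> assms by (simp add: divide_less_eq mult.commute)
  then have "F (T / real N) \<le> F \<delta>"
    using renewal_row.F_mono[OF row[OF \<open>1 \<le> N\<close>]] by simp
  moreover have "0 < F (T / real N)"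
    by (rule renewal_row.F_T_div_n_pos[OF row[OF \<open>1 \<le> N\<close>]])
  ultimately show ?thesis by simp
qed

lemma F_lt_1:
  assumes "\<delta> \<le> T / 2" shows "F \<delta> < 1"
  using renewal_row.F_T_div_Suc_n_lt_1[OF row[of 1]] renewal_row.F_mono[OF row[of 1] assms]
  by simp

lemma cond_mean_nonneg: "1 \<le> n \<Longrightarrow> 0 \<le> \<mu> n"
  using renewal_row.cond_mean_nonneg[OF row] by (simp add: row_event)

lemma n_cond_mean_le: "1 \<le> n \<Longrightarrow> real n * \<mu> n \<le> T"
  using renewal_row.n_cond_mean_le[OF row] by (simp add: row_event)

lemma cond_mean_tendsto_0: "\<mu> \<longlonglongrightarrow> 0"
proof (rule tendsto_sandwich[of "\<lambda>_. 0" _ _ "\<lambda>n. T / real n"])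
  show "\<forall>\<^sub>F n in sequentially. 0 \<le> \<mu> n"
    using eventually_ge_at_top[of 1] by eventually_elim (rule cond_mean_nonneg)
  show "\<forall>\<^sub>F n in sequentially. \<mu> n \<le> T / real n"
    using eventually_ge_at_top[of 1]
    by eventually_elim (use n_cond_mean_le in \<open>auto simp: pos_le_divide_eq mult.commute\<close>)
qed (auto intro: lim_const_over_n)

lemma cond_var_tendsto_0: "(\<lambda>n. cond_event_exp M (renewal_event M X T n) (\<lambda>x. (X n 1 x - \<mu> n)\<^sup>2)) \<longlonglongrightarrow> 0"
proof (rule tendsto_sandwich[of "\<lambda>_. 0" _ _ "\<lambda>n. T * \<mu> n + (\<mu> n)\<^sup>2"])
  show "\<forall>\<^sub>F n in sequentially. 0 \<le> cond_event_exp M (renewal_event M X T n) (\<lambda>x. (X n 1 x - \<mu> n)\<^sup>2)"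
    using eventually_ge_at_top[of 1]
    by eventually_elim (use renewal_row.cond_var_nonneg[OF row] in \<open>simp add: row_event\<close>)
  show "\<forall>\<^sub>F n in sequentially. cond_event_exp M (renewal_event M X T n) (\<lambda>x. (X n 1 x - \<mu> n)\<^sup>2) \<le> T * \<mu> n + (\<mu> n)\<^sup>2"
    using eventually_ge_at_top[of 1]
    by eventually_elim (use renewal_row.cond_var_le[OF row] in \<open>simp add: row_event\<close>)
  show "(\<lambda>n. T * \<mu> n + (\<mu> n)\<^sup>2) \<longlonglongrightarrow> 0"
    using tendsto_add[OF tendsto_mult[OF tendsto_const cond_mean_tendsto_0] tendsto_power[OF cond_mean_tendsto_0, of 2]]
    by simp
qed simp

lemma n_cond_mean_tendsto_T: "(\<lambda>n. real n * \<mu> n) \<longlonglongrightarrow> T"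
proof (rule LIMSEQ_of_error_bounds)
  show "\<forall>\<^sub>F n in sequentially. real n * \<mu> n \<le> T"
    using eventually_ge_at_top[of 1] by eventually_elim (rule n_cond_mean_le)
  show "0 < T / 2" using T_pos by simp
  fix \<delta> :: real assume \<delta>: "0 < \<delta>" "\<delta> \<le> T / 2"
  have m: "0 < truncated_mean D \<delta>"
    using renewal_row.truncated_mean_pos[OF row[of 1] \<delta>(1) F_pos[OF \<delta>(1)]] by simp
  have "\<forall>\<^sub>F n in sequentially. T < real n * truncated_mean D \<delta> \<longrightarrow>
      T - real n * \<mu> n \<le> \<delta> + T\<^sup>2 / (1 - F \<delta>) / (real n * truncated_mean D \<delta> - T)"
    using eventually_ge_at_top[of 1]
  proof eventually_elim
    case (elim n)
    show ?case
      using renewal_row.T_minus_n_cond_mean_le[OF row[OF elim] \<delta>(1) F_lt_1[OF \<delta>(2)]]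
      by (simp add: row_event)
  qed
  with m show "\<exists>c m. 0 < m \<and> (\<forall>\<^sub>F n in sequentially. T < real n * m \<longrightarrow>
      T - real n * \<mu> n \<le> \<delta> + c / (real n * m - T))"
    by blast
qed

end

text \<open>The row variables are extended by 0 outside {1..n+1}, so that every X i is measurable.\<close>

lemma renewal_array_padded:
  fixes M :: "'a measure" and F f :: "real \<Rightarrow> real" and T :: real
    and \<xi> :: "nat \<Rightarrow> nat \<Rightarrow> 'a \<Rightarrow> real"
  assumes "prob_space M"
    and dens: "\<forall>n\<ge>1. \<forall>i\<in>{1..n+1}. distributed M lborel (\<xi> n i) (\<lambda>s. ennreal (f s))"
    and cdf: "\<forall>n\<ge>1. \<forall>i\<in>{1..n+1}. \<forall>t. measure M {x \<in> space M. \<xi> n i x \<le> t} = F t"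
    and nonneg: "\<forall>t<0. F t = 0"
    and T: "0 < T"
    and indep: "\<forall>n\<ge>1. prob_space.indep_vars M (\<lambda>_. borel) (\<xi> n) {1..n+1}"
    and pos: "\<forall>n\<ge>1. 0 < measure M (renewal_event M \<xi> T n)"
  shows "renewal_array M (\<lambda>n i. if i \<in> {1..n+1} then \<xi> n i else (\<lambda>_. 0)) T F
    (density lborel (\<lambda>s. ennreal (f s)))"
proof (rule renewal_array.intro)
  interpret prob_space M by fact
  fix n :: nat assume n: "1 \<le> n"
  define Y where "Y i = (if i \<in> {1..n+1} then \<xi> n i else (\<lambda>_. 0))" for i
  have f_measurable: "(\<lambda>s. ennreal (f s)) \<in> borel_measurable lborel"
    using dens[rule_format, of 1 1] by (simp add: distributed_def)
  have "renewal_row M Y n T F (density lborel (\<lambda>s. ennreal (f s)))"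
  proof unfold_locales
    show "1 \<le> n" "0 < T" by fact+
    show "Y i \<in> borel_measurable M" for i
      using dens[rule_format, OF n, of i] by (auto simp: Y_def distributed_def)
    show "indep_vars (\<lambda>_. borel) Y {1..n+1}"
      using indep[rule_format, OF n] by (subst indep_vars_cong[OF refl, where Y="\<xi> n"]) (auto simp: Y_def)
    show "distr M borel (Y i) = density lborel (\<lambda>s. ennreal (f s))" if i: "i \<in> {1..n+1}" for i
    proof -
      have "distr M borel (Y i) = distr M lborel (\<xi> n i)"
        using i by (intro distr_cong) (auto simp: Y_def)
      then show ?thesis using dens[rule_format, OF n i] by (simp add: distributed_def)
    qed
    show "prob {x\<in>space M. Y i x \<le> t} = F t" if "i \<in> {1..n+1}" for i t
      using cdf[rule_format, OF n that] that by (simp add: Y_def)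
    show "F t = 0" if "t < 0" for t using nonneg that by auto
    have "AE s in lborel. s \<in> {0::real} \<longrightarrow> ennreal (f s) = 0"
      using AE_lborel_singleton[of "0::real"] by eventually_elim auto
    then have "{0} \<in> null_sets (density lborel (\<lambda>s. ennreal (f s)))"
      by (simp add: null_sets_density_iff[OF f_measurable])
    then show "emeasure (density lborel (\<lambda>s. ennreal (f s))) {0} = 0" by auto
    have "renewal_event M (\<lambda>_. Y) T n = renewal_event M \<xi> T n"
      by (rule renewal_event_cong) (simp add: Y_def)
    then show "0 < prob (renewal_event M (\<lambda>_. Y) T n)" using pos n by simp
  qed
  then show "renewal_row M (\<lambda>i. if i \<in> {1..n+1} then \<xi> n i else (\<lambda>_. 0)) n T F
      (density lborel (\<lambda>s. ennreal (f s)))"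
    unfolding Y_def[abs_def] .
qed

theorem lemma4p3:
  fixes M :: "'a measure" and F f :: "real \<Rightarrow> real" and T :: real
    and \<xi> :: "nat \<Rightarrow> nat \<Rightarrow> 'a \<Rightarrow> real"
  assumes "prob_space M"
    and f_nonneg: "\<forall>t. 0 \<le> f t"
    and dens: "\<forall>n\<ge>1. \<forall>i\<in>{1..n+1}. distributed M lborel (\<xi> n i) (\<lambda>s. ennreal (f s))"
    and cdf: "\<forall>n\<ge>1. \<forall>i\<in>{1..n+1}. \<forall>t. measure M {x \<in> space M. \<xi> n i x \<le> t} = F t"
    and nonneg: "\<forall>t<0. F t = 0"
    and finite_mean: "set_integrable lborel {0..} (\<lambda>t. 1 - F t)"
    and T: "0 < T"
    and indep: "\<forall>n\<ge>1. prob_space.indep_vars M (\<lambda>_. borel) (\<xi> n) {1..n+1}"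
    and pos: "\<forall>n\<ge>1. 0 < measure M (renewal_event M \<xi> T n)"
  shows "(\<lambda>n. cond_event_exp M (renewal_event M \<xi> T n) (\<xi> n 1)) \<longlonglongrightarrow> 0
       \<and> (\<lambda>n. cond_event_exp M (renewal_event M \<xi> T n)
               (\<lambda>x. (\<xi> n 1 x - cond_event_exp M (renewal_event M \<xi> T n) (\<xi> n 1))\<^sup>2))
            \<longlonglongrightarrow> 0
       \<and> (\<lambda>n. real n * cond_event_exp M (renewal_event M \<xi> T n) (\<xi> n 1)) \<longlonglongrightarrow> T"
proof -
  define Y where "Y n i = (if i \<in> {1..n+1} then \<xi> n i else (\<lambda>_. 0))" for n i
  interpret renewal_array M Y T F "density lborel (\<lambda>s. ennreal (f s))"
    unfolding Y_def using assms by (intro renewal_array_padded)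
  have "renewal_event M Y T n = renewal_event M \<xi> T n" for n
    by (rule renewal_event_cong) (simp add: Y_def)
  moreover have "Y n 1 = \<xi> n 1" for n
    by (simp add: Y_def)
  ultimately show ?thesis
    using cond_mean_tendsto_0 cond_var_tendsto_0 n_cond_mean_tendsto_T by simp
qed

end
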